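(* Let $q$ be a rational number in $[0,1]$. Then there is an expression $q=\frac mn$ (with $m$ a nonnegative integer and $n$ a positive integer) where $n=2^rs$ with $s$ odd and $2^r\ge s-1$; and for any such expression, $\mathbb{Q}[C_n]$ contains a projection $e$ (i.e. $e=e^*=e^2$) with $\mathrm{tr}_{C_n}(e)=q$ and $ne\in\mathbb{Z}[C_n]$.
   Context: $C_n$ denotes a cyclic group of order $n$. For $a\in\mathbb{Q}[C_n]$, $\mathrm{tr}_{C_n}(a)$ is the coefficient of the identity element in $a$; the involution is $(\sum a_g g)^*=\sum \overline{a_g}g^{-1}$. *)

theory Defs
  imports Main "HOL.Rat"
begin

text \<open>The group ring Q[C_n]: the cyclic group C_n is modelled by {0..<n} with addition mod n
  (generator g corresponds to 1, g^k to k). An element sum_k a_k g^k is a function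
  a :: nat => rat vanishing outside {0..<n}.\<close>

definition cyc_elem :: "nat \<Rightarrow> (nat \<Rightarrow> rat) \<Rightarrow> bool" where
  "cyc_elem n a \<longleftrightarrow> (\<forall>k. n \<le> k \<longrightarrow> a k = 0)"

definition cyc_mult :: "nat \<Rightarrow> (nat \<Rightarrow> rat) \<Rightarrow> (nat \<Rightarrow> rat) \<Rightarrow> (nat \<Rightarrow> rat)" where
  "cyc_mult n a b = (\<lambda>k. if k < n then (\<Sum>i<n. a i * b ((k + n - i) mod n)) else 0)"

text \<open>Involution (sum a_g g)^* = sum conj(a_g) g^{-1}; conjugation is trivial on Q.\<close>
definition cyc_star :: "nat \<Rightarrow> (nat \<Rightarrow> rat) \<Rightarrow> (nat \<Rightarrow> rat)" where
  "cyc_star n a = (\<lambda>k. if k < n then a ((n - k) mod n) else 0)"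

definition cyc_tr :: "(nat \<Rightarrow> rat) \<Rightarrow> rat" where
  "cyc_tr a = a 0"

definition cyc_projection :: "nat \<Rightarrow> (nat \<Rightarrow> rat) \<Rightarrow> bool" where
  "cyc_projection n e \<longleftrightarrow> cyc_elem n e \<and> cyc_star n e = e \<and> cyc_mult n e e = e"

end

theory Submission
  imports Defs "HOL-Library.Function_Algebras" "HOL-Computational_Algebra.Primes"
begin

(*
  For u dividing n, the element A u = (u/n) sum_{u | k} g^k averages over the subgroup generated
  by g^u; it is a self-adjoint idempotent of trace u/n, and A u * A v = A (gcd u v).
  Let n = 2^r s with s odd. The projections A s and A (2^j s) - A (2^(j-1) s), 1 <= j <= r, are
  mutually orthogonal with traces 1/2^r and 2^(j-1)/2^r, so summing them along the binary digits
  of a <= 2^r gives a projection p_a of trace a/2^r; as A (2^j s) * A (2^r) = A (2^j), the product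
  p_a F with F = A (2^r) has trace a/n. Since s - 1 <= 2^r, every m <= n is a + b (s - 1) with
  a, b <= 2^r, and e = p_b (1 - F) + p_a F is a projection of trace b/2^r - b/n + a/n = m/n.
  All these elements are integer combinations of the A u, hence n e has integer coefficients.
  For the existence part, write q = m/(2^k s) and multiply numerator and denominator by 2^s.
*)

lemma int_cyclic_diff:
  assumes "i \<le> n"
  shows "int ((k + n - i) mod n) = (int k - int i) mod int n"
proof -
  from assms have "int (k + n - i) = (int k - int i) + int n" by simp
  then show ?thesis by (simp add: zmod_int)
qed

lemma cyclic_diff_involution:
  fixes n :: nat
  assumes "i < n"
  shows "(k + n - (k + n - i) mod n) mod n = i"
proof -
  have "int ((k + n - (k + n - i) mod n) mod n) = int i"
    using assms by (simp only: int_cyclic_diff less_imp_le mod_le_divisor) (simp add: zmod_int mod_simps)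
  then show ?thesis by simp
qed

lemma cyclic_diff_add_cancel:
  fixes n :: nat
  assumes "i < n" "j < n"
  shows "((i + n - j) mod n + j) mod n = i"
proof -
  have "int (((i + n - j) mod n + j) mod n) = int i"
    using assms by (simp only: int_cyclic_diff less_imp_le zmod_int of_nat_add) (simp add: mod_simps)
  then show ?thesis by simp
qed

lemma cyclic_add_diff_cancel:
  fixes n :: nat
  assumes "l < n" "j < n"
  shows "((l + j) mod n + n - j) mod n = l"
proof -
  have "int (((l + j) mod n + n - j) mod n) = int l"
    using assms by (simp only: int_cyclic_diff less_imp_le) (simp add: zmod_int mod_simps)
  then show ?thesis by simp
qed

lemma cyclic_diff_add:
  fixes n :: nat
  assumes "l < n" "j < n"
  shows "(k + n - (l + j) mod n) mod n = ((k + n - j) mod n + n - l) mod n"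
proof -
  have "int ((k + n - (l + j) mod n) mod n) = int (((k + n - j) mod n + n - l) mod n)"
    using assms by (simp only: int_cyclic_diff less_imp_le mod_le_divisor)
      (simp add: zmod_int mod_simps diff_diff_eq ac_simps)
  then show ?thesis by simp
qed

lemma card_residue_class:
  fixes n l c :: nat
  assumes "l dvd n" "c < l"
  shows "card {i. i < n \<and> i mod l = c} = n div l"
proof -
  have "{i. i < n \<and> i mod l = c} = (\<lambda>j. j * l + c) ` {..<n div l}"
  proof (intro set_eqI iffI)
    fix i assume "i \<in> {i. i < n \<and> i mod l = c}"
    then have "i div l < n div l" "i = i div l * l + c"
      using assms by (auto simp: div_less_iff_less_mult)
    then show "i \<in> (\<lambda>j. j * l + c) ` {..<n div l}" by blast
  next
    fix i assume "i \<in> (\<lambda>j. j * l + c) ` {..<n div l}"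
    then obtain j where j: "j < n div l" "i = j * l + c" by blast
    have "j * l + c < (j + 1) * l" using assms by simp
    also have "\<dots> \<le> n" using j assms by (metis Suc_eq_plus1 Suc_leI dvd_div_mult_self mult_le_mono1)
    finally show "i \<in> {i. i < n \<and> i mod l = c}" using j assms by simp
  qed
  moreover have "inj_on (\<lambda>j. j * l + c) {..<n div l}"
    using assms by (intro inj_onI) simp
  ultimately show ?thesis by (simp add: card_image)
qed

lemma dvd_and_dvd_diff_iff_lcm_dvd:
  fixes u v k :: int
  assumes "gcd u v dvd k"
  obtains c where "\<And>i. u dvd i \<and> v dvd k - i \<longleftrightarrow> lcm u v dvd i - c"
proof -
  obtain t where t: "k = gcd u v * t" using assms by blast
  obtain x y where xy: "x * u + y * v = gcd u v" using bezout_int by blast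
  define c where "c = x * u * t"
  have "u dvd c" unfolding c_def by simp
  moreover have "v dvd k - c"
    unfolding c_def t xy[symmetric] by (simp add: algebra_simps)
  ultimately have "u dvd i \<and> v dvd k - i \<longleftrightarrow> lcm u v dvd i - c" for i
    using dvd_diff_left_iff[of u c i] dvd_diff_right_iff[of v "k - c" "i - c"] by simp
  then show ?thesis using that by blast
qed

lemma card_convolution_support:
  fixes n u v k :: nat
  assumes "u dvd n" "v dvd n" "k < n"
  shows "card {i. i < n \<and> u dvd i \<and> v dvd k + n - i} = (if gcd u v dvd k then n div lcm u v else 0)"
proof -
  have int_iff: "u dvd i \<and> v dvd k + n - i \<longleftrightarrow> int u dvd int i \<and> int v dvd int k - int i"
    if "i < n" for i
  proof -
    have "int (k + n - i) = (int k - int i) + int n" using that by simp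
    then show ?thesis
      using \<open>v dvd n\<close> by (simp add: dvd_add_left_iff flip: int_dvd_int_iff)
  qed
  show ?thesis
  proof (cases "gcd u v dvd k")
    case True
    then have "gcd (int u) (int v) dvd int k" by (simp add: gcd_int_int_eq)
    then obtain c where c: "\<And>i. int u dvd i \<and> int v dvd int k - i \<longleftrightarrow> lcm (int u) (int v) dvd i - c"
      using dvd_and_dvd_diff_iff_lcm_dvd by metis
    have "lcm u v dvd n" using assms by simp
    then have "lcm u v > 0" using assms by (metis dvd_pos_nat gr_zeroI not_less0)
    define c' where "c' = nat (c mod int (lcm u v))"
    have "c' < lcm u v"
      using \<open>lcm u v > 0\<close> unfolding c'_def by (simp add: nat_less_iff)
    have residue: "int (lcm u v) dvd int i - c \<longleftrightarrow> i mod lcm u v = c'" for i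
      using \<open>lcm u v > 0\<close> unfolding c'_def
      by (auto simp add: mod_eq_dvd_iff[symmetric] nat_eq_iff simp flip: of_nat_mod)
    have "u dvd i \<and> v dvd k + n - i \<longleftrightarrow> i mod lcm u v = c'" if "i < n" for i
      unfolding int_iff[OF that] c lcm_int_int_eq residue ..
    then have "{i. i < n \<and> u dvd i \<and> v dvd k + n - i} = {i. i < n \<and> i mod lcm u v = c'}"
      by auto
    with True show ?thesis
      using card_residue_class[OF \<open>lcm u v dvd n\<close> \<open>c' < lcm u v\<close>] by simp
  next
    case False
    have "{i. i < n \<and> u dvd i \<and> v dvd k + n - i} = {}"
    proof (intro equals0I)
      fix i assume "i \<in> {i. i < n \<and> u dvd i \<and> v dvd k + n - i}"
      then have "int u dvd int i" "int v dvd int k - int i"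
        using int_iff by auto
      then have "gcd (int u) (int v) dvd int i" "gcd (int u) (int v) dvd int k - int i"
        by (meson dvd_trans gcd_dvd1 gcd_dvd2)+
      then have "gcd (int u) (int v) dvd int k"
        by (metis diff_add_cancel dvd_add)
      with False show False by (simp add: gcd_int_int_eq)
    qed
    with False show ?thesis by simp
  qed
qed

lemma split_with_bounded_digits:
  fixes m d P :: nat
  assumes "d \<le> P" "m \<le> P + P * d"
  obtains a b where "a \<le> P" "b \<le> P" "m = a + b * d"
proof (cases "m div d \<le> P")
  case True
  have "m mod d \<le> P"
  proof (cases "d = 0")
    case True
    with assms(2) show ?thesis by simp
  next
    case False
    then have "m mod d < d" by simp
    with assms(1) show ?thesis by linarith
  qed
  with True show ?thesis
    by (intro that[of "m mod d" "m div d"]) simp_all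
next
  case False
  then have "P * d \<le> m div d * d"
    by simp
  also have "\<dots> \<le> m"
    by simp
  finally show ?thesis
    using assms by (intro that[of "m - P * d" P]) auto
qed

context
  fixes n :: nat
begin

abbreviation cyc_conv :: "(nat \<Rightarrow> rat) \<Rightarrow> (nat \<Rightarrow> rat) \<Rightarrow> nat \<Rightarrow> rat" (infixl "\<star>" 70)
  where "x \<star> y \<equiv> cyc_mult n x y"

lemma cyc_mult_commute: "x \<star> y = y \<star> x"
proof
  fix k
  show "(x \<star> y) k = (y \<star> x) k"
  proof (cases "k < n")
    case True
    let ?\<sigma> = "\<lambda>i. (k + n - i) mod n"
    have "(\<Sum>i<n. x i * y (?\<sigma> i)) = (\<Sum>i<n. y i * x (?\<sigma> i))"
      by (rule sum.reindex_bij_witness[where i = ?\<sigma> and j = ?\<sigma>])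
        (use True in \<open>auto simp: cyclic_diff_involution\<close>)
    with True show ?thesis by (simp add: cyc_mult_def)
  qed (simp add: cyc_mult_def)
qed

lemma cyc_mult_assoc: "x \<star> y \<star> z = x \<star> (y \<star> z)"
proof
  fix k
  show "(x \<star> y \<star> z) k = (x \<star> (y \<star> z)) k"
  proof (cases "k < n")
    case True
    have shift: "(\<Sum>i<n. y ((i + n - j) mod n) * z ((k + n - i) mod n)) = (y \<star> z) ((k + n - j) mod n)"
      if "j < n" for j
    proof -
      have "(\<Sum>l<n. y l * z (((k + n - j) mod n + n - l) mod n))
          = (\<Sum>i<n. y ((i + n - j) mod n) * z ((k + n - i) mod n))"
        by (rule sum.reindex_bij_witness[where i = "\<lambda>i. (i + n - j) mod n" and j = "\<lambda>l. (l + j) mod n"])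
          (use that in \<open>auto simp: cyclic_diff_add_cancel cyclic_add_diff_cancel cyclic_diff_add\<close>)
      with that show ?thesis by (simp add: cyc_mult_def)
    qed
    have "(x \<star> y \<star> z) k = (\<Sum>i<n. \<Sum>j<n. x j * (y ((i + n - j) mod n) * z ((k + n - i) mod n)))"
      using True by (simp add: cyc_mult_def sum_distrib_right mult.assoc)
    also have "\<dots> = (\<Sum>j<n. x j * (\<Sum>i<n. y ((i + n - j) mod n) * z ((k + n - i) mod n)))"
      by (subst sum.swap) (simp add: sum_distrib_left)
    also have "\<dots> = (x \<star> (y \<star> z)) k"
      using True by (simp add: shift cyc_mult_def)
    finally show ?thesis .
  qed (simp add: cyc_mult_def)
qed

lemma cyc_mult_add_left: "(x + y) \<star> z = x \<star> z + y \<star> z"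
  by (rule ext) (simp add: cyc_mult_def distrib_right sum.distrib)

lemma cyc_mult_diff_left: "(x - y) \<star> z = x \<star> z - y \<star> z"
  by (rule ext) (simp add: cyc_mult_def left_diff_distrib sum_subtractf)

lemma cyc_mult_zero_left: "0 \<star> x = 0"
  by (rule ext) (simp add: cyc_mult_def)

lemma cyc_mult_add_right: "x \<star> (y + z) = x \<star> y + x \<star> z"
  by (metis cyc_mult_commute cyc_mult_add_left)

lemma cyc_mult_diff_right: "x \<star> (y - z) = x \<star> y - x \<star> z"
  by (metis cyc_mult_commute cyc_mult_diff_left)

lemma cyc_mult_zero_right: "x \<star> 0 = 0"
  by (metis cyc_mult_commute cyc_mult_zero_left)

lemmas cyc_mult_distribs =
  cyc_mult_add_left cyc_mult_diff_left cyc_mult_add_right cyc_mult_diff_right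

lemma idempotent_diff_add:
  assumes xx: "x \<star> x = x" and yy: "y \<star> y = y" and yx: "y \<star> x = y"
    and pp: "p \<star> p = p" and py: "p \<star> y = p"
  shows "(x - y + p) \<star> (x - y + p) = x - y + p" and "(x - y + p) \<star> x = x - y + p"
proof -
  have px: "p \<star> x = p"
    by (metis cyc_mult_assoc py yx)
  have xy: "x \<star> y = y" and xp: "x \<star> p = p" and yp: "y \<star> p = p"
    using yx px py by (simp_all add: cyc_mult_commute)
  show "(x - y + p) \<star> (x - y + p) = x - y + p" "(x - y + p) \<star> x = x - y + p"
    by (simp_all add: cyc_mult_distribs xx yy yx xy pp px py xp yp)
qed

(* q + (p - q) f is q (1 - f) + p f, written without a unit. *)
lemma idempotent_glue:
  assumes pp: "p \<star> p = p" and qq: "q \<star> q = q" and ff: "f \<star> f = f"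
  shows "(q + (p - q) \<star> f) \<star> (q + (p - q) \<star> f) = q + (p - q) \<star> f"
proof -
  define d where "d = p - q"
  have "q \<star> (d \<star> f) = (q \<star> d) \<star> f" and "(d \<star> f) \<star> q = (d \<star> q) \<star> f"
    and "(d \<star> f) \<star> (d \<star> f) = (d \<star> d) \<star> f"
    by (metis cyc_mult_assoc cyc_mult_commute ff)+
  then have "(q + d \<star> f) \<star> (q + d \<star> f) = q \<star> q + (q \<star> d + d \<star> q + d \<star> d) \<star> f"
    by (simp add: cyc_mult_add_left cyc_mult_add_right)
  also have "q \<star> d + d \<star> q + d \<star> d = d"
    unfolding d_def by (simp add: cyc_mult_distribs pp qq cyc_mult_commute[of p q])
  finally show ?thesis
    unfolding d_def qq .
qed

definition cyc_avg :: "nat \<Rightarrow> nat \<Rightarrow> rat" where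
  "cyc_avg u = (\<lambda>k. if k < n \<and> u dvd k then of_nat u / of_nat n else 0)"

lemma cyc_avg_mult:
  assumes u: "u dvd n" and v: "v dvd n"
  shows "cyc_avg u \<star> cyc_avg v = cyc_avg (gcd u v)"
proof
  fix k
  show "(cyc_avg u \<star> cyc_avg v) k = cyc_avg (gcd u v) k"
  proof (cases "k < n")
    case True
    define S where "S = {i. i < n \<and> u dvd i \<and> v dvd k + n - i}"
    have "(cyc_avg u \<star> cyc_avg v) k
        = (\<Sum>i<n. if u dvd i \<and> v dvd k + n - i then of_nat u / of_nat n * (of_nat v / of_nat n) else 0)"
      using True v by (auto simp: cyc_mult_def cyc_avg_def dvd_mod_iff intro!: sum.cong)
    also have "\<dots> = of_nat (card S) * (of_nat u / of_nat n * (of_nat v / of_nat n))"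
      unfolding S_def by (simp add: sum.If_cases Int_def)
    also have "\<dots> = cyc_avg (gcd u v) k"
    proof (cases "gcd u v dvd k")
      case True
      obtain t where t: "n = lcm u v * t" using u v by (metis dvd_def lcm_least)
      have "lcm u v > 0" using \<open>k < n\<close> t by (intro Nat.gr0I) auto
      then have "card S = t"
        unfolding S_def card_convolution_support[OF u v \<open>k < n\<close>] using True t by simp
      moreover have "(of_nat u * of_nat v :: rat) = of_nat (gcd u v) * of_nat (lcm u v)"
        by (metis of_nat_mult prod_gcd_lcm_nat)
      moreover have "(of_nat n :: rat) = of_nat (lcm u v) * of_nat t"
        using t by simp
      moreover have "(of_nat n :: rat) \<noteq> 0"
        using \<open>k < n\<close> by simp
      ultimately have "of_nat (card S) * (of_nat u / of_nat n * (of_nat v / of_nat n))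
          = (of_nat (gcd u v) / of_nat n :: rat)"
        by (simp add: field_simps)
      with True \<open>k < n\<close> show ?thesis by (simp add: cyc_avg_def)
    next
      case False
      then have "card S = 0"
        unfolding S_def card_convolution_support[OF u v \<open>k < n\<close>] by simp
      with False show ?thesis by (simp add: cyc_avg_def)
    qed
    finally show ?thesis .
  qed (simp add: cyc_mult_def cyc_avg_def)
qed

lemma cyc_avg_star:
  assumes "u dvd n"
  shows "cyc_star n (cyc_avg u) = cyc_avg u"
proof
  fix k
  have "u dvd (n - k) mod n \<longleftrightarrow> u dvd k" if "k < n"
    using assms that by (simp add: dvd_mod_iff dvd_diff_nat) (metis dvd_diff_nat diff_diff_cancel less_imp_le)
  then show "cyc_star n (cyc_avg u) k = cyc_avg u k"
    by (simp add: cyc_star_def cyc_avg_def)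
qed

lemma cyc_tr_avg: "0 < n \<Longrightarrow> cyc_tr (cyc_avg u) = of_nat u / of_nat n"
  by (simp add: cyc_tr_def cyc_avg_def)

inductive avg_span :: "(nat \<Rightarrow> rat) \<Rightarrow> bool" where
  avg: "u dvd n \<Longrightarrow> avg_span (cyc_avg u)"
| zero: "avg_span 0"
| add: "avg_span x \<Longrightarrow> avg_span y \<Longrightarrow> avg_span (x + y)"
| diff: "avg_span x \<Longrightarrow> avg_span y \<Longrightarrow> avg_span (x - y)"

lemma avg_span_cyc_elem: "avg_span x \<Longrightarrow> cyc_elem n x"
  by (induction rule: avg_span.induct) (auto simp: cyc_elem_def cyc_avg_def)

lemma cyc_star_add: "cyc_star n (x + y) = cyc_star n x + cyc_star n y"
  by (simp add: cyc_star_def fun_eq_iff)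

lemma cyc_star_diff: "cyc_star n (x - y) = cyc_star n x - cyc_star n y"
  by (simp add: cyc_star_def fun_eq_iff)

lemma avg_span_star: "avg_span x \<Longrightarrow> cyc_star n x = x"
proof (induction rule: avg_span.induct)
  case (avg u)
  then show ?case by (rule cyc_avg_star)
next
  case zero
  show ?case by (simp add: cyc_star_def fun_eq_iff)
next
  case (add x y)
  then show ?case by (simp only: cyc_star_add)
next
  case (diff x y)
  then show ?case by (simp only: cyc_star_diff)
qed

lemma avg_span_integral: "avg_span x \<Longrightarrow> of_nat n * x k \<in> \<int>"
proof (induction rule: avg_span.induct)
  case (avg u)
  then show ?case by (cases "n = 0") (auto simp: cyc_avg_def)
qed (simp_all add: distrib_left right_diff_distrib)

lemma avg_span_mult:
  assumes "avg_span x" "avg_span y"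
  shows "avg_span (x \<star> y)"
  using assms(1)
proof induction
  case (avg u)
  show ?case using assms(2)
  proof induction
    case (avg v)
    then have "gcd u v dvd n" by (meson dvd_trans gcd_dvd2)
    with avg.hyps \<open>u dvd n\<close> show ?case by (simp add: cyc_avg_mult avg_span.avg)
  next
    case zero
    show ?case unfolding cyc_mult_zero_right by (rule avg_span.zero)
  next
    case (add x y)
    show ?case unfolding cyc_mult_add_right using add.IH by (rule avg_span.add)
  next
    case (diff x y)
    show ?case unfolding cyc_mult_diff_right using diff.IH by (rule avg_span.diff)
  qed
next
  case zero
  show ?case unfolding cyc_mult_zero_left by (rule avg_span.zero)
next
  case (add x y)
  show ?case unfolding cyc_mult_add_left using add.IH by (rule avg_span.add)
next
  case (diff x y)
  show ?case unfolding cyc_mult_diff_left using diff.IH by (rule avg_span.diff)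
qed

context
  fixes r s :: nat
  assumes n_eq: "n = 2 ^ r * s" and odd_s: "odd s"
begin

private lemma n_pos: "0 < n"
  using n_eq odd_s by (simp add: odd_pos)

private lemma tr_avg: "cyc_tr (cyc_avg u) = of_nat u / of_nat n"
  using n_pos by (rule cyc_tr_avg)

private lemma of_nat_n: "(of_nat n :: rat) = 2 ^ r * of_nat s"
  using n_eq by simp

private lemma dvd_n: "j \<le> r \<Longrightarrow> 2 ^ j * s dvd n" "2 ^ r dvd n"
  using n_eq by (simp_all add: le_imp_power_dvd)

lemma cyc_avg_odd_mult_odd:
  assumes "i \<le> j" "j \<le> r"
  shows "cyc_avg (2 ^ i * s) \<star> cyc_avg (2 ^ j * s) = cyc_avg (2 ^ i * s)"
proof -
  have "gcd (2 ^ i * s) (2 ^ j * s) = 2 ^ i * s"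
    using assms(1) by (simp add: gcd_nat.absorb1 le_imp_power_dvd)
  with assms show ?thesis by (simp add: cyc_avg_mult dvd_n)
qed

lemma cyc_avg_odd_mult_dyadic:
  assumes "j \<le> r"
  shows "cyc_avg (2 ^ j * s) \<star> cyc_avg (2 ^ r) = cyc_avg (2 ^ j)"
proof -
  have "(2::nat) ^ r = 2 ^ j * 2 ^ (r - j)"
    using assms by (simp flip: power_add)
  then have "gcd (2 ^ j * s) (2 ^ r) = 2 ^ j * gcd s (2 ^ (r - j))"
    by (simp add: gcd_mult_distrib_nat)
  also have "gcd s (2 ^ (r - j)) = 1"
    using odd_s by simp
  finally have "gcd (2 ^ j * s) (2 ^ r) = 2 ^ j"
    by simp
  with assms show ?thesis by (simp add: cyc_avg_mult dvd_n)
qed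

lemma dyadic_projection:
  assumes "t \<le> r" "a \<le> 2 ^ t"
  shows "\<exists>p. avg_span p \<and> p \<star> p = p \<and> p \<star> cyc_avg (2 ^ t * s) = p
    \<and> cyc_tr p = of_nat a / 2 ^ r \<and> cyc_tr (p \<star> cyc_avg (2 ^ r)) = of_nat a / of_nat n"
  using assms
proof (induction t arbitrary: a)
  case 0
  then consider "a = 0" | "a = 1" by fastforce
  then show ?case
  proof cases
    case 1
    then have "cyc_tr 0 = of_nat a / 2 ^ r" "cyc_tr (0 \<star> cyc_avg (2 ^ r)) = of_nat a / of_nat n"
      by (simp_all add: cyc_tr_def cyc_mult_zero_left)
    then show ?thesis
      using avg_span.zero cyc_mult_zero_left by blast
  next
    case 2
    have "cyc_tr (cyc_avg s) = 1 / 2 ^ r" "cyc_tr (cyc_avg 1) = 1 / of_nat n"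
      using odd_s by (simp_all add: tr_avg of_nat_n odd_pos)
    with 2 show ?thesis
      using cyc_avg_odd_mult_odd[of 0 0] cyc_avg_odd_mult_dyadic[of 0] dvd_n(1)[of 0]
      by (intro exI[of _ "cyc_avg s"]) (simp add: avg_span.avg)
  qed
next
  case (Suc t)
  define X where "X = cyc_avg (2 ^ Suc t * s)"
  define Y where "Y = cyc_avg (2 ^ t * s)"
  have "t \<le> r" using Suc.prems by simp
  have XX: "X \<star> X = X" and YY: "Y \<star> Y = Y" and YX: "Y \<star> X = Y"
    unfolding X_def Y_def by (rule cyc_avg_odd_mult_odd; use Suc.prems in simp)+
  have absorb: "p \<star> X = p" if "p \<star> Y = p" for p
    by (metis YX cyc_mult_assoc that)
  show ?case
  proof (cases "a \<le> 2 ^ t")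
    case True
    with Suc.IH \<open>t \<le> r\<close> show ?thesis
      unfolding X_def[symmetric] Y_def[symmetric] using absorb by blast
  next
    case False
    then obtain a' where a': "a = 2 ^ t + a'" "a' \<le> 2 ^ t"
      using Suc.prems(2) by (intro that[of "a - 2 ^ t"]) auto
    from Suc.IH[OF \<open>t \<le> r\<close> \<open>a' \<le> 2 ^ t\<close>] obtain p where p: "avg_span p" "p \<star> p = p" "p \<star> Y = p"
        "cyc_tr p = of_nat a' / 2 ^ r" "cyc_tr (p \<star> cyc_avg (2 ^ r)) = of_nat a' / of_nat n"
      unfolding Y_def by blast
    define e where "e = X - Y + p"
    have span: "avg_span e"
      unfolding e_def X_def Y_def using Suc.prems p(1) by (intro avg_span.intros dvd_n) simp_all
    have idem: "e \<star> e = e" "e \<star> X = e"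
      unfolding e_def using idempotent_diff_add[OF XX YY YX p(2,3)] by simp_all
    have "cyc_tr e = cyc_tr X - cyc_tr Y + cyc_tr p"
      unfolding e_def by (simp add: cyc_tr_def)
    also have "\<dots> = of_nat a / 2 ^ r"
      unfolding X_def Y_def tr_avg of_nat_n p(4) a'(1) using odd_s by (simp add: odd_pos field_simps)
    finally have tr_e: "cyc_tr e = of_nat a / 2 ^ r" .
    have "e \<star> cyc_avg (2 ^ r) = cyc_avg (2 ^ Suc t) - cyc_avg (2 ^ t) + p \<star> cyc_avg (2 ^ r)"
      unfolding e_def X_def Y_def using Suc.prems
      by (simp add: cyc_mult_add_left cyc_mult_diff_left cyc_avg_odd_mult_dyadic del: power_Suc)
    then have "cyc_tr (e \<star> cyc_avg (2 ^ r))
        = cyc_tr (cyc_avg (2 ^ Suc t)) - cyc_tr (cyc_avg (2 ^ t)) + cyc_tr (p \<star> cyc_avg (2 ^ r))"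
      by (simp add: cyc_tr_def)
    also have "\<dots> = of_nat a / of_nat n"
      unfolding tr_avg p(5) a'(1) by (simp add: add_divide_distrib)
    finally show ?thesis
      using span idem tr_e unfolding X_def by blast
  qed
qed

lemma projection_with_trace:
  assumes "s - 1 \<le> 2 ^ r" "m \<le> n"
  shows "\<exists>e. avg_span e \<and> e \<star> e = e \<and> cyc_tr e = of_nat m / of_nat n"
proof -
  have "m \<le> 2 ^ r + 2 ^ r * (s - 1)"
    using assms(2) odd_s n_eq by (simp add: odd_pos algebra_simps)
  with assms(1) obtain a b where ab: "a \<le> 2 ^ r" "b \<le> 2 ^ r" "m = a + b * (s - 1)"
    by (rule split_with_bounded_digits)
  obtain p where p: "avg_span p" "p \<star> p = p" "cyc_tr (p \<star> cyc_avg (2 ^ r)) = of_nat a / of_nat n"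
    using dyadic_projection[OF order.refl ab(1)] by blast
  obtain q where q: "avg_span q" "q \<star> q = q"
      "cyc_tr q = of_nat b / 2 ^ r" "cyc_tr (q \<star> cyc_avg (2 ^ r)) = of_nat b / of_nat n"
    using dyadic_projection[OF order.refl ab(2)] by blast
  define F where "F = cyc_avg (2 ^ r)"
  have FF: "F \<star> F = F"
    unfolding F_def using cyc_avg_mult[OF dvd_n(2) dvd_n(2)] by simp
  define e where "e = q + (p - q) \<star> F"
  have span: "avg_span e"
    unfolding e_def F_def using p(1) q(1) dvd_n(2)
    by (intro avg_span.add avg_span_mult avg_span.diff avg_span.avg)
  have idem: "e \<star> e = e"
    unfolding e_def using p(2) q(2) FF by (rule idempotent_glue)
  have "cyc_tr e = cyc_tr q + cyc_tr (p \<star> F) - cyc_tr (q \<star> F)"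
    unfolding e_def by (simp add: cyc_mult_diff_left cyc_tr_def)
  also have "\<dots> = of_nat b / 2 ^ r + of_nat a / of_nat n - of_nat b / of_nat n"
    unfolding F_def q(3,4) p(3) ..
  also have "\<dots> = of_nat m / of_nat n"
    unfolding of_nat_n using odd_s ab(3) by (simp add: field_simps of_nat_diff odd_pos Suc_leI)
  finally show ?thesis
    using span idem by blast
qed

end

end

lemma nonneg_rat_as_fraction_with_odd_part_bound:
  fixes q :: rat
  assumes "0 \<le> q"
  shows "\<exists>m n r s. 0 < n \<and> q = of_nat m / of_nat n \<and> n = 2 ^ r * s \<and> odd s \<and> s - 1 \<le> 2 ^ r"
proof -
  obtain a b where ab: "q = of_int a / of_int b" "b > 0"
    by (metis prod.exhaust quotient_of_denom_pos quotient_of_div)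
  with assms have "a \<ge> 0"
    by (simp add: zero_le_divide_iff)
  define m0 n0 where "m0 = nat a" and "n0 = nat b"
  have "n0 > 0" and q: "q = of_nat m0 / of_nat n0"
    using ab \<open>a \<ge> 0\<close> unfolding m0_def n0_def by simp_all
  obtain s where s: "n0 = 2 ^ multiplicity 2 n0 * s" "\<not> 2 dvd s"
    using multiplicity_decompose'[of n0 2] \<open>n0 > 0\<close> by auto
  define r where "r = multiplicity 2 n0 + s"
  have "s - 1 < 2 ^ s" by (meson diff_le_self le_less_trans less_exp)
  also have "(2::nat) ^ s \<le> 2 ^ r" unfolding r_def by simp
  finally have "s - 1 \<le> 2 ^ r" by simp
  moreover have "q = of_nat (m0 * 2 ^ s) / of_nat (n0 * 2 ^ s)"
    using q by simp
  moreover have "n0 * 2 ^ s = 2 ^ r * s"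
    using s(1) unfolding r_def by (simp add: power_add)
  ultimately have "0 < n0 * 2 ^ s \<and> q = of_nat (m0 * 2 ^ s) / of_nat (n0 * 2 ^ s)
      \<and> n0 * 2 ^ s = 2 ^ r * s \<and> odd s \<and> s - 1 \<le> 2 ^ r"
    using \<open>n0 > 0\<close> s(2) by (simp add: odd_pos)
  then show ?thesis by blast
qed

theorem lemma5p1:
  fixes q :: rat
  assumes "0 \<le> q" and "q \<le> 1"
  shows "(\<exists>(m::nat) (n::nat) (r::nat) (s::nat). 0 < n \<and> q = of_nat m / of_nat n \<and>
            n = 2 ^ r * s \<and> odd s \<and> 2 ^ r \<ge> s - 1)
       \<and> (\<forall>(m::nat) (n::nat) (r::nat) (s::nat). 0 < n \<and> q = of_nat m / of_nat n \<and>
            n = 2 ^ r * s \<and> odd s \<and> 2 ^ r \<ge> s - 1 \<longrightarrow>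
            (\<exists>e. cyc_projection n e \<and> cyc_tr e = q \<and>
                 (\<forall>k. of_nat n * e k \<in> \<int>)))"
proof (intro conjI allI impI)
  show "\<exists>m n r s. 0 < n \<and> q = of_nat m / of_nat n \<and> n = 2 ^ r * s \<and> odd s \<and> 2 ^ r \<ge> s - 1"
    using nonneg_rat_as_fraction_with_odd_part_bound[OF assms(1)] by simp
next
  fix m n r s :: nat
  assume "0 < n \<and> q = of_nat m / of_nat n \<and> n = 2 ^ r * s \<and> odd s \<and> 2 ^ r \<ge> s - 1"
  then have n: "0 < n" and q: "q = of_nat m / of_nat n" and rs: "n = 2 ^ r * s" "odd s" "s - 1 \<le> 2 ^ r"
    by blast+
  have "m \<le> n"
    using assms(2) n unfolding q by (simp add: divide_le_eq_1)
  then obtain e where "avg_span n e" "cyc_mult n e e = e" "cyc_tr e = q"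
    using projection_with_trace[OF rs] q by blast
  then show "\<exists>e. cyc_projection n e \<and> cyc_tr e = q \<and> (\<forall>k. of_nat n * e k \<in> \<int>)"
    using avg_span_cyc_elem avg_span_star avg_span_integral unfolding cyc_projection_def by blast
qed

end
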